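(* Let $\mathcal{N}$ be a Beeping Network with $n$ nodes and maximum degree $\Delta$, where each node has a unique ID from $[1,n^c]$ for a constant $c\ge1$ and each node knows $n$, $c$ and $\Delta$. There is a deterministic distributed algorithm (for the Beeping Network) that simulates any single round of any algorithm designed for the CONGEST model: if each node $u$ holds, for each neighbor $v\in N(u)$, a (possibly different) message $m_{u,v}$ of $O(\log n)$ bits, then after $O(\Delta^2\,\mathrm{polylog}\, n\,\log\Delta)$ beeping rounds, for every $u$ and every $v\in N(u)$, the node $v$ knows $m_{u,v}$ together with the ID of $u$. Here $\mathrm{polylog}\, n$ is a fixed polylogarithmic function of $n$.
   Context: A Beeping Network is a network of $n$ nodes whose topology is an undirected graph $G=(V,E)$; $N(v)$ is the neighbor set of $v$. Time is divided into synchronous rounds and all nodes start simultaneously. In each round every node either beeps or listens; a listening node hears "silence" if no neighbor beeps and "noise" if at least one neighbor beeps, and cannot distinguish one beep from several. The algorithm may be adaptive (decisions can depend on the silence/noise feedback heard so far). In the CONGEST model, in each round each node can send a possibly different message of $O(\log n)$ bits to each neighbor, and all such messages are received without collisions. *)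

theory Defs
  imports Complex_Main
begin

text \<open>Network: vertices are natural numbers (any finite graph is isomorphic to one),
  V finite vertex set, E symmetric irreflexive adjacency relation inside V.\<close>

definition network :: "nat set \<Rightarrow> (nat \<Rightarrow> nat \<Rightarrow> bool) \<Rightarrow> bool" where
  "network V E \<longleftrightarrow> finite V \<and> (\<forall>u v. E u v \<longrightarrow> u \<in> V \<and> v \<in> V)
      \<and> (\<forall>u v. E u v \<longrightarrow> E v u) \<and> (\<forall>u. \<not> E u u)"

definition degree :: "nat set \<Rightarrow> (nat \<Rightarrow> nat \<Rightarrow> bool) \<Rightarrow> nat \<Rightarrow> nat" where
  "degree V E v = card {u \<in> V. E v u}"

definition max_degree :: "nat set \<Rightarrow> (nat \<Rightarrow> nat \<Rightarrow> bool) \<Rightarrow> nat" where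
  "max_degree V E = Max (degree V E ` V)"

text \<open>A deterministic adaptive beeping protocol: in each round, a node decides to beep
  (True) or listen (False) as a function of its knowledge: n, c, Delta, its own ID,
  its local input (messages indexed by recipient ID), and the list of feedbacks heard
  so far.\<close>

type_synonym protocol =
  "nat \<Rightarrow> real \<Rightarrow> nat \<Rightarrow> nat \<Rightarrow> (nat \<Rightarrow> bool list) \<Rightarrow> bool list \<Rightarrow> bool"

fun beep_hist :: "protocol \<Rightarrow> real \<Rightarrow> nat set \<Rightarrow> (nat \<Rightarrow> nat \<Rightarrow> bool) \<Rightarrow> (nat \<Rightarrow> nat)
      \<Rightarrow> (nat \<Rightarrow> nat \<Rightarrow> bool list) \<Rightarrow> nat \<Rightarrow> nat \<Rightarrow> bool list" where
  "beep_hist P c V E idf inp 0 = (\<lambda>v. [])"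
| "beep_hist P c V E idf inp (Suc t) =
     (let h = beep_hist P c V E idf inp t;
          b = (\<lambda>w. P (card V) c (max_degree V E) (idf w) (inp w) (h w))
      in (\<lambda>v. h v @ [\<not> b v \<and> (\<exists>w\<in>V. E v w \<and> b w)]))"

end

(* Both phases of the simulation run through the slots (p, r, i, h) with p < M prime, r < M, i < W
   and h < 2.  A node with ID x carrying the number X beeps in slot (p, r, i, h) iff x mod p = r and
   bit i of the word x + 2^L (X mod p) is 1 - h.  A node v whose ID is not congruent to r modulo p
   hears noise in exactly one of the two polarities of every bit iff it has neighbours with ID
   congruent to r and all of them send the same word; it then reads off the ID of such a neighbour u
   together with X_u mod p, and it never reads anything false.  Distinct IDs below 2^L agree modulo fewer than L
   primes, so if there are more than Delta L + B primes below M, each neighbour u of v has more than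
   B primes on which no other node of the closed neighbourhood of v shares its residue.  In phase 0
   (X = 0) every node learns the IDs of its neighbours; in phase 1 it sends the code X < 2^B of its
   list of (neighbour ID, message) pairs, which the receiver recovers as the unique number below 2^B
   with the received residues.  The primes come from the central binomial coefficient: there are
   R = Delta L + B + 1 = O(Delta log n) primes below M = O(R log R), so each phase takes
   2 M^2 W = O(Delta^2 log^5 n) rounds. *)

theory Submission
  imports Defs "HOL-Computational_Algebra.Primes" "HOL-Library.Log_Nat"
begin

lemma less_power2_floorlog: "x < 2 ^ floorlog 2 x"
  by (rule floorlog_leD) auto

lemma floorlog2_leI: "x < 2 ^ w \<Longrightarrow> floorlog 2 x \<le> w"
  by (rule floorlog_leI) auto

lemma floorlog2_le_self: "floorlog 2 x \<le> x"
  by (rule floorlog2_leI) (rule less_exp)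

lemma floorlog2_mult_le: "floorlog 2 (x * y) \<le> floorlog 2 x + floorlog 2 y"
proof (rule floorlog2_leI)
  have "x * y < 2 ^ floorlog 2 x * 2 ^ floorlog 2 y"
    using less_power2_floorlog[of x] less_power2_floorlog[of y]
    by (cases "x = 0 \<or> y = 0") (auto intro: mult_strict_mono)
  then show "x * y < 2 ^ (floorlog 2 x + floorlog 2 y)"
    by (simp add: power_add)
qed

lemma floorlog2_pos: "x \<ge> 1 \<Longrightarrow> floorlog 2 x \<ge> 1"
  using floorlog_eq_zero_iff[of 2 x] by auto

lemma ceiling_log2_le_floorlog2:
  assumes "n \<ge> 1"
  shows "nat \<lceil>log 2 (real n)\<rceil> \<le> floorlog 2 n"
proof -
  have "log 2 (real n) < floorlog 2 n"
    using assms less_power2_floorlog[of n] by (intro log2_of_power_less) auto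
  then show ?thesis by linarith
qed

lemma floorlog2_le_log2:
  assumes "n \<ge> 1"
  shows "real (floorlog 2 n) \<le> 2 * log 2 (real n + 1)"
proof -
  have "real (floorlog 2 n) = real (nat \<lfloor>log 2 (real n)\<rfloor>) + 1"
    using assms by (simp add: floorlog_def)
  also have "\<dots> \<le> log 2 (real n + 1) + 1"
  proof -
    have "log 2 (real n) \<le> log 2 (real n + 1)"
      using assms by simp
    moreover have "0 \<le> \<lfloor>log 2 (real n)\<rfloor>"
      using assms by simp
    ultimately show ?thesis
      using of_int_floor_le[of "log 2 (real n)"] by linarith
  qed
  finally have "real (floorlog 2 n) \<le> log 2 (real n + 1) + 1" .
  moreover have "1 \<le> log 2 (real n + 1)"
    using assms by simp
  ultimately show ?thesis by linarith
qed

section \<open>Legendre's formula and a Chebyshev-type bound\<close>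

lemma multiplicity_eq_card_prime_powers_dvd:
  fixes p x :: nat
  assumes p: "prime p" and x: "0 < x" "x \<le> N"
  shows "multiplicity p x = card {i \<in> {1..N}. p ^ i dvd x}"
proof -
  have "multiplicity p x < 2 ^ multiplicity p x"
    by (rule less_exp)
  also have "\<dots> \<le> p ^ multiplicity p x"
    by (intro power_mono prime_ge_2_nat[OF p]) simp
  also have "\<dots> \<le> x"
    by (rule dvd_imp_le[OF multiplicity_dvd x(1)])
  finally have "multiplicity p x \<le> N"
    using x(2) by simp
  have "p ^ i dvd x \<longleftrightarrow> i \<le> multiplicity p x" for i
    by (rule power_dvd_iff_le_multiplicity) (use p x not_prime_unit in auto)
  then have "{i \<in> {1..N}. p ^ i dvd x} = {i \<in> {1..N}. i \<le> multiplicity p x}"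
    by (simp only:)
  also have "\<dots> = {1..multiplicity p x}"
    using \<open>multiplicity p x \<le> N\<close> by auto
  finally show ?thesis
    by simp
qed

lemma multiplicity_fact_nat:
  fixes p :: nat
  assumes p: "prime p" and "n \<le> N"
  shows "multiplicity p (fact n :: nat) = (\<Sum>i\<in>{1..N}. n div p ^ i)"
  using \<open>n \<le> N\<close>
proof (induction n)
  case 0
  then show ?case by simp
next
  case (Suc n)
  have "multiplicity p (fact (Suc n) :: nat) = multiplicity p (Suc n) + multiplicity p (fact n :: nat)"
    using p by (simp only: fact_Suc of_nat_id) (rule prime_elem_multiplicity_mult_distrib; simp)
  also have "multiplicity p (Suc n) = (\<Sum>i\<in>{1..N}. if p ^ i dvd Suc n then 1 else 0)"
    using multiplicity_eq_card_prime_powers_dvd[OF p _ Suc.prems] by (simp add: sum.If_cases Int_def)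
  also have "multiplicity p (fact n :: nat) = (\<Sum>i\<in>{1..N}. n div p ^ i)"
    using Suc by simp
  also have "(\<Sum>i\<in>{1..N}. if p ^ i dvd Suc n then 1 else 0) + (\<Sum>i\<in>{1..N}. n div p ^ i)
      = (\<Sum>i\<in>{1..N}. Suc n div p ^ i)"
    unfolding sum.distrib[symmetric] by (intro sum.cong refl) (simp add: div_Suc dvd_eq_mod_eq_0)
  finally show ?case .
qed

lemma double_div_le:
  fixes m q :: nat
  shows "2 * m div q \<le> 2 * (m div q) + (if q \<le> 2 * m then 1 else 0)"
proof (cases "q \<le> 2 * m \<and> q > 0")
  case True
  then have q: "q > 0"
    by simp
  have "2 * m = 2 * (m div q) * q + 2 * (m mod q)"
    using div_mult_mod_eq[of m q] by (metis add_mult_distrib2 mult.assoc add.commute)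
  also have "\<dots> < (2 * (m div q) + 2) * q"
    using q by (simp add: algebra_simps)
  finally have "2 * m div q < 2 * (m div q) + 2"
    by (simp add: less_mult_imp_div_less)
  then show ?thesis
    using True by simp
qed auto

lemma fact_double_eq: "fact (2 * m) = fact m * fact m * (2 * m choose m :: nat)"
  using binomial_fact_lemma[of m "2 * m"] by simp

(* Legendre's formula termwise: each difference 2m div p^i - 2 (m div p^i) is 0 or 1, and it is 0
   as soon as p^i > 2m. *)
lemma multiplicity_central_binomial_le:
  fixes p m :: nat
  assumes p: "prime p"
  shows "multiplicity p (2 * m choose m) \<le> card {i \<in> {1..2 * m}. p ^ i \<le> 2 * m}"
proof -
  let ?k = "multiplicity p (2 * m choose m)"
  have "multiplicity p (fact (2 * m) :: nat) = 2 * multiplicity p (fact m :: nat) + ?k"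
    using p by (simp add: fact_double_eq prime_elem_multiplicity_mult_distrib)
  then have sums: "(\<Sum>i\<in>{1..2 * m}. 2 * m div p ^ i) = 2 * (\<Sum>i\<in>{1..2 * m}. m div p ^ i) + ?k"
    using multiplicity_fact_nat[OF p, of "2 * m" "2 * m"] multiplicity_fact_nat[OF p, of m "2 * m"]
    by simp
  have "(\<Sum>i\<in>{1..2 * m}. 2 * m div p ^ i)
      \<le> (\<Sum>i\<in>{1..2 * m}. 2 * (m div p ^ i) + (if p ^ i \<le> 2 * m then 1 else 0))"
    by (intro sum_mono double_div_le)
  also have "\<dots> = 2 * (\<Sum>i\<in>{1..2 * m}. m div p ^ i) + card {i \<in> {1..2 * m}. p ^ i \<le> 2 * m}"
    by (simp add: sum.distrib sum_distrib_left sum.If_cases Int_def)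
  finally show ?thesis
    using sums by linarith
qed

lemma prime_power_multiplicity_central_binomial_le:
  fixes p m :: nat
  assumes p: "prime p" and m: "m \<ge> 1"
  shows "p ^ multiplicity p (2 * m choose m) \<le> 2 * m"
proof (rule ccontr)
  define k where "k = multiplicity p (2 * m choose m)"
  assume "\<not> p ^ multiplicity p (2 * m choose m) \<le> 2 * m"
  then have big: "2 * m < p ^ k"
    by (simp add: k_def)
  have "{i \<in> {1..2 * m}. p ^ i \<le> 2 * m} \<subseteq> {1..<k}"
  proof
    fix i
    assume i: "i \<in> {i \<in> {1..2 * m}. p ^ i \<le> 2 * m}"
    then have "p ^ i < p ^ k"
      using big by simp
    then have "i < k"
      by (rule power_less_imp_less_exp[OF prime_gt_1_nat[OF p]])
    then show "i \<in> {1..<k}"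
      using i by simp
  qed
  then have "card {i \<in> {1..2 * m}. p ^ i \<le> 2 * m} \<le> k - 1"
    using card_mono[OF finite_atLeastLessThan] by fastforce
  then have "k \<le> k - 1"
    using multiplicity_central_binomial_le[OF p, of m] by (simp add: k_def)
  then have "k = 0"
    by simp
  then show False
    using big m by simp
qed

lemma central_binomial_le_power_card_primes:
  fixes m :: nat
  assumes m: "m \<ge> 1"
  shows "(2 * m choose m) \<le> (2 * m) ^ card {p. prime p \<and> p \<le> 2 * m}"
proof -
  let ?C = "2 * m choose m"
  have "prime_factors ?C \<subseteq> {p. prime p \<and> p \<le> 2 * m}"
  proof
    fix p
    assume "p \<in> prime_factors ?C"
    then have p: "prime p" "p dvd ?C"
      by (auto simp: prime_factors_dvd)
    have "?C dvd fact (2 * m)"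
      by (simp add: fact_double_eq)
    then have "p dvd fact (2 * m)"
      using p(2) by (rule dvd_trans[rotated])
    then show "p \<in> {p. prime p \<and> p \<le> 2 * m}"
      using p(1) prime_dvd_fact_iff by simp
  qed
  then have card: "card (prime_factors ?C) \<le> card {p. prime p \<and> p \<le> 2 * m}"
    by (intro card_mono) auto
  have "?C = (\<Prod>p\<in>prime_factors ?C. p ^ multiplicity p ?C)"
    using prod_prime_factors[of ?C] by simp
  also have "\<dots> \<le> (\<Prod>p\<in>prime_factors ?C. 2 * m)"
  proof (rule prod_mono)
    fix p
    assume "p \<in> prime_factors ?C"
    then show "0 \<le> p ^ multiplicity p ?C \<and> p ^ multiplicity p ?C \<le> 2 * m"
      using prime_power_multiplicity_central_binomial_le[OF in_prime_factors_imp_prime m] by simp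
  qed
  also have "\<dots> = (2 * m) ^ card (prime_factors ?C)"
    by simp
  also have "\<dots> \<le> (2 * m) ^ card {p. prime p \<and> p \<le> 2 * m}"
    using m card by (intro power_increasing) auto
  finally show ?thesis .
qed

definition chebyshev_bound :: "nat \<Rightarrow> nat" where
  "chebyshev_bound R = 4 * R * (floorlog 2 R + 3) + 1"

lemma card_primes_less_chebyshev_bound:
  assumes R: "R \<ge> 1"
  shows "R \<le> card {p. prime p \<and> p < chebyshev_bound R}"
proof -
  define s where "s = 2 * (floorlog 2 R + 3)"
  define m where "m = R * s"
  define \<pi> where "\<pi> = card {p. prime p \<and> p \<le> 2 * m}"
  have m: "m \<ge> 1"
    using R by (simp add: m_def s_def)
  have "2 * m \<le> 2 ^ s"
  proof -
    let ?b = "floorlog 2 R"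
    have R_less: "2 ^ 2 * R < 2 ^ 2 * 2 ^ ?b"
      using less_power2_floorlog[of R] by simp
    have "(1::nat) \<le> 2 ^ ?b" "(2::nat) ^ (?b + 2) = 4 * 2 ^ ?b"
      by simp_all
    then have "?b + 3 \<le> 2 ^ (?b + 2)"
      using less_exp[of ?b] by linarith
    have "2 * m = 2 ^ 2 * R * (?b + 3)"
      by (simp add: m_def s_def)
    also have "\<dots> < 2 ^ 2 * 2 ^ ?b * 2 ^ (?b + 2)"
      by (rule mult_less_le_imp_less) (use R_less \<open>?b + 3 \<le> 2 ^ (?b + 2)\<close> in auto)
    also have "\<dots> = 2 ^ (2 + ?b + (?b + 2))"
      by (simp only: power_add)
    also have "\<dots> \<le> 2 ^ s"
      by (intro power_increasing) (simp_all add: s_def)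
    finally show ?thesis
      by simp
  qed
  have "(2::nat) ^ (2 * m) = 4 ^ m"
    by (simp add: power_mult)
  also have "\<dots> \<le> (2 * m choose m) * (2 * m)"
  proof -
    have "real (4 ^ m) \<le> real ((2 * m choose m) * (2 * m))"
      using central_binomial_lower_bound[of m] m by (simp add: field_simps)
    then show ?thesis
      by (simp only: of_nat_le_iff)
  qed
  also have "\<dots> \<le> (2 * m) ^ \<pi> * (2 * m)"
    using central_binomial_le_power_card_primes[OF m] by (simp add: \<pi>_def)
  also have "\<dots> = (2 * m) ^ (\<pi> + 1)"
    by simp
  also have "\<dots> \<le> (2 ^ s) ^ (\<pi> + 1)"
    using \<open>2 * m \<le> 2 ^ s\<close> by (rule power_mono) simp
  also have "\<dots> = 2 ^ (s * (\<pi> + 1))"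
    by (simp only: power_mult)
  finally have "s * (2 * R) \<le> s * (\<pi> + 1)"
    by (simp add: m_def algebra_simps)
  moreover have "0 < s"
    by (simp add: s_def)
  ultimately have "2 * R \<le> \<pi> + 1"
    using mult_le_cancel1 by blast
  moreover have "{p. prime p \<and> p < chebyshev_bound R} = {p. prime p \<and> p \<le> 2 * m}"
  proof -
    have "chebyshev_bound R = Suc (2 * m)"
      by (simp add: chebyshev_bound_def m_def s_def algebra_simps)
    then show ?thesis
      by (simp add: less_Suc_eq_le)
  qed
  ultimately show ?thesis
    using R by (simp add: \<pi>_def)
qed

lemma two_power_card_le_if_primes_dvd:
  fixes S :: "nat set"
  assumes S: "finite S" "\<forall>p\<in>S. prime p \<and> p dvd d" and d: "d > 0"
  shows "2 ^ card S \<le> d"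
proof -
  have "2 ^ card S \<le> \<Prod>S"
    using S by (induction S rule: finite_induct) (auto simp: prime_ge_2_nat mult_le_mono)
  also have "\<Prod>S dvd d"
    using S
  proof (induction S rule: finite_induct)
    case (insert p S)
    then have "coprime p (\<Prod>S)"
      by (intro prod_coprime_right primes_coprime) auto
    with insert show ?case
      by (simp add: divides_mult)
  qed simp
  then have "\<Prod>S \<le> d"
    using d by (rule dvd_imp_le)
  finally show ?thesis .
qed

lemma card_primes_congruent_less:
  fixes x y :: nat
  assumes "x \<noteq> y" "x < 2 ^ k" "y < 2 ^ k" "finite S"
    and S: "\<forall>p\<in>S. prime p \<and> x mod p = y mod p"
  shows "card S < k"
proof -
  have "\<forall>p\<in>S. prime p \<and> p dvd (max x y - min x y)"
    using S by (metis max_def min_def mod_eq_dvd_iff_nat nle_le)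
  then have "2 ^ card S \<le> max x y - min x y"
    using assms by (intro two_power_card_le_if_primes_dvd) auto
  also have "\<dots> < 2 ^ k"
    using assms by auto
  finally show ?thesis
    by simp
qed

lemma sum_bits_eq_mod: "(\<Sum>i<W. if odd ((z::nat) div 2 ^ i) then 2 ^ i else 0) = z mod 2 ^ W"
proof (induction W)
  case (Suc W)
  have "z mod 2 ^ Suc W = 2 ^ W * (z div 2 ^ W mod 2) + z mod 2 ^ W"
    using mod_mult2_eq[of z "2 ^ W" 2] by (simp add: mult.commute)
  then show ?case
    using Suc by (simp add: odd_iff_mod_2_eq_one even_iff_mod_2_eq_zero)
qed simp

lemma length_beep_hist [simp]: "length (beep_hist P c V E idf inp t v) = t"
  by (induction t arbitrary: v) (auto simp: Let_def)

lemma take_beep_hist: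
  "t' \<le> t \<Longrightarrow> take t' (beep_hist P c V E idf inp t v) = beep_hist P c V E idf inp t' v"
proof (induction t arbitrary: v)
  case (Suc t)
  then show ?case
    by (cases "t' = Suc t") (simp_all add: Let_def)
qed simp

lemma nth_beep_hist:
  assumes "t' < t"
  shows "beep_hist P c V E idf inp t v ! t' =
    (\<not> P (card V) c (max_degree V E) (idf v) (inp v) (beep_hist P c V E idf inp t' v) \<and>
      (\<exists>w\<in>V. E v w \<and> P (card V) c (max_degree V E) (idf w) (inp w) (beep_hist P c V E idf inp t' w)))"
proof -
  have "beep_hist P c V E idf inp t v ! t' = take (Suc t') (beep_hist P c V E idf inp t v) ! t'"
    by simp
  also have "\<dots> = beep_hist P c V E idf inp (Suc t') v ! t'"
    using assms by (simp add: take_beep_hist)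
  finally show ?thesis
    by (simp add: Let_def nth_append)
qed

lemma nth_drop_beep_hist:
  assumes "\<And>w j. w \<in> V \<Longrightarrow> j < d \<Longrightarrow>
      P (card V) c (max_degree V E) (idf w) (inp w) (beep_hist P c V E idf inp (t + j) w) = B w j"
    and "v \<in> V" "j < d"
  shows "drop t (beep_hist P c V E idf inp (t + d) v) ! j = (\<not> B v j \<and> (\<exists>w\<in>V. E v w \<and> B w j))"
proof -
  have "drop t (beep_hist P c V E idf inp (t + d) v) ! j = beep_hist P c V E idf inp (t + d) v ! (t + j)"
    using assms(3) by simp
  also have "\<dots> = (\<not> B v j \<and> (\<exists>w\<in>V. E v w \<and> B w j))"
    using assms by (subst nth_beep_hist) auto
  finally show ?thesis .
qed

section \<open>One phase of slots\<close>

definition slot :: "nat \<Rightarrow> nat \<Rightarrow> nat \<Rightarrow> nat \<Rightarrow> nat \<Rightarrow> nat \<Rightarrow> nat" where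
  "slot M W p r i h = ((p * M + r) * W + i) * 2 + h"

lemma slot_less:
  assumes "p < M" "r < M" "i < W" "h < 2"
  shows "slot M W p r i h < M * M * W * 2"
proof -
  have "p * M + r + 1 \<le> M * M"
    using assms mult_le_mono1[of "Suc p" M M] by simp
  then have "(p * M + r) * W + i + 1 \<le> M * M * W"
    using assms mult_le_mono1[of "p * M + r + 1" "M * M" W] by simp
  then show ?thesis
    using assms unfolding slot_def by simp
qed

lemma slot_fields:
  assumes "p < M" "r < M" "i < W" "h < 2"
  defines "t \<equiv> slot M W p r i h"
  shows "t mod 2 = h" "t div 2 mod W = i" "t div 2 div W mod M = r" "t div 2 div W div M = p"
proof -
  define q where "q = (p * M + r) * W + i"
  have "t = q * 2 + h"
    by (simp add: t_def q_def slot_def)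
  then have t2: "t div 2 = q" "t mod 2 = h"
    using \<open>h < 2\<close> by presburger+
  then have "t div 2 div W = p * M + r"
    using assms by (simp add: q_def)
  then show "t mod 2 = h" "t div 2 mod W = i" "t div 2 div W mod M = r" "t div 2 div W div M = p"
    using t2 assms by (simp_all add: q_def)
qed

definition word :: "nat \<Rightarrow> nat \<Rightarrow> nat \<Rightarrow> nat \<Rightarrow> nat" where
  "word L x X p = x + 2 ^ L * (X mod p)"

definition beeps_in_slot :: "nat \<Rightarrow> nat \<Rightarrow> nat \<Rightarrow> nat \<Rightarrow> nat \<Rightarrow> nat \<Rightarrow> bool" where
  "beeps_in_slot L M W x X t =
     (let h = t mod 2; i = t div 2 mod W; r = t div 2 div W mod M; p = t div 2 div W div M
      in prime p \<and> x mod p = r \<and> odd (word L x X p div 2 ^ i) = (h = 0))"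

lemma beeps_in_slot_slot:
  assumes "p < M" "r < M" "i < W" "h < 2"
  shows "beeps_in_slot L M W x X (slot M W p r i h) =
           (prime p \<and> x mod p = r \<and> odd (word L x X p div 2 ^ i) = (h = 0))"
  using slot_fields[OF assms] by (simp add: beeps_in_slot_def Let_def)

definition polarities_differ :: "bool list \<Rightarrow> nat \<Rightarrow> nat \<Rightarrow> nat \<Rightarrow> nat \<Rightarrow> bool" where
  "polarities_differ fl M W p r = (\<forall>i<W. fl ! slot M W p r i 0 \<noteq> fl ! slot M W p r i 1)"

definition read_word :: "bool list \<Rightarrow> nat \<Rightarrow> nat \<Rightarrow> nat \<Rightarrow> nat \<Rightarrow> nat" where
  "read_word fl M W p r = (\<Sum>i<W. if fl ! slot M W p r i 0 then 2 ^ i else 0)"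

definition received :: "nat \<Rightarrow> nat \<Rightarrow> nat \<Rightarrow> nat \<Rightarrow> bool list \<Rightarrow> (nat \<times> nat \<times> nat) set" where
  "received L M W x fl =
     (\<lambda>(p, r). (read_word fl M W p r mod 2 ^ L, p, read_word fl M W p r div 2 ^ L)) `
       {(p, r). prime p \<and> p < M \<and> r < M \<and> x mod p \<noteq> r \<and> polarities_differ fl M W p r}"

definition heard_ids :: "nat \<Rightarrow> nat \<Rightarrow> nat \<Rightarrow> nat \<Rightarrow> bool list \<Rightarrow> nat set" where
  "heard_ids L M W x fl = fst ` received L M W x fl"

definition decode :: "nat \<Rightarrow> nat \<Rightarrow> nat \<Rightarrow> nat \<Rightarrow> bool list \<Rightarrow> nat \<Rightarrow> nat \<Rightarrow> nat" where
  "decode L M W x fl B y =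
     (THE X. X < 2 ^ B \<and> (\<forall>p \<rho>. (y, p, \<rho>) \<in> received L M W x fl \<longrightarrow> X mod p = \<rho>))"

locale slot_phase =
  fixes V :: "nat set" and E :: "nat \<Rightarrow> nat \<Rightarrow> bool" and idf :: "nat \<Rightarrow> nat"
    and L M W :: nat and X :: "nat \<Rightarrow> nat" and v :: nat and fl :: "bool list"
  assumes irrefl: "\<And>u. \<not> E u u"
    and inj: "inj_on idf V"
    and id_less: "\<And>u. u \<in> V \<Longrightarrow> idf u < 2 ^ L"
    and word_width: "2 ^ L * M \<le> 2 ^ W"
    and v: "v \<in> V"
    and feedback: "\<And>t. t < M * M * W * 2 \<Longrightarrow>
          fl ! t = (\<not> beeps_in_slot L M W (idf v) (X v) t \<and>
                    (\<exists>w\<in>V. E v w \<and> beeps_in_slot L M W (idf w) (X w) t))"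
begin

lemma word_less:
  assumes "u \<in> V" "0 < p" "p < M"
  shows "word L (idf u) (X u) p < 2 ^ W"
proof -
  have "X u mod p < p"
    using assms(2) by simp
  then have "X u mod p + 1 \<le> M"
    using assms(3) by linarith
  then have "word L (idf u) (X u) p < 2 ^ L * (X u mod p + 1)"
    using id_less[OF assms(1)] by (simp add: word_def)
  also have "\<dots> \<le> 2 ^ L * M"
    using \<open>X u mod p + 1 \<le> M\<close> by (rule mult_le_mono2)
  finally show ?thesis
    using word_width by simp
qed

lemma word_mod_div:
  assumes "u \<in> V"
  shows "word L (idf u) (X u) p mod 2 ^ L = idf u" "word L (idf u) (X u) p div 2 ^ L = X u mod p"
  using id_less[OF assms] by (simp_all add: word_def)

lemma feedback_slot:
  assumes "prime p" "p < M" "r < M" "i < W" "h < 2" "idf v mod p \<noteq> r"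
  shows "fl ! slot M W p r i h =
     (\<exists>w\<in>V. E v w \<and> idf w mod p = r \<and> odd (word L (idf w) (X w) p div 2 ^ i) = (h = 0))"
  using feedback[OF slot_less[OF assms(2-5)]] beeps_in_slot_slot[OF assms(2-5)] assms(1,6) by auto

lemma read_word_eq:
  assumes "u \<in> V" "prime p" "p < M"
    and bits: "\<And>i. i < W \<Longrightarrow> fl ! slot M W p r i 0 = odd (word L (idf u) (X u) p div 2 ^ i)"
  shows "read_word fl M W p r = word L (idf u) (X u) p"
proof -
  have "read_word fl M W p r = (\<Sum>i<W. if odd (word L (idf u) (X u) p div 2 ^ i) then 2 ^ i else 0)"
    unfolding read_word_def using bits by (intro sum.cong) auto
  also have "\<dots> = word L (idf u) (X u) p"
    using word_less[OF assms(1) prime_gt_0_nat assms(3)] assms(2) by (simp add: sum_bits_eq_mod)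
  finally show ?thesis .
qed

lemma received_sound:
  assumes "(y, p, \<rho>) \<in> received L M W (idf v) fl"
  shows "\<exists>u\<in>V. E v u \<and> y = idf u \<and> \<rho> = X u mod p"
proof -
  obtain r where pr: "prime p" "p < M" "r < M" "idf v mod p \<noteq> r" "polarities_differ fl M W p r"
    and y: "y = read_word fl M W p r mod 2 ^ L" and \<rho>: "\<rho> = read_word fl M W p r div 2 ^ L"
    using assms unfolding received_def by auto
  have "2 < M"
    using pr prime_ge_2_nat[of p] by simp
  then have "(2::nat) ^ L * 2 < 2 ^ W"
    using word_width by (meson mult_less_cancel1 order.strict_trans2 zero_less_power zero_less_numeral)
  then have "0 < W"
    by (cases W) auto
  then have "fl ! slot M W p r 0 0 \<noteq> fl ! slot M W p r 0 1"
    using pr(5) unfolding polarities_differ_def by auto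
  then obtain u where u: "u \<in> V" "E v u" "idf u mod p = r"
    using feedback_slot[OF pr(1-3) \<open>0 < W\<close> _ pr(4), of 0] feedback_slot[OF pr(1-3) \<open>0 < W\<close> _ pr(4), of 1]
    by auto
  have "fl ! slot M W p r i 0 = odd (word L (idf u) (X u) p div 2 ^ i)" if "i < W" for i
  proof -
    have "fl ! slot M W p r i 0 \<noteq> fl ! slot M W p r i 1"
      using pr(5) that by (simp add: polarities_differ_def)
    then show ?thesis
      using u feedback_slot[OF pr(1-3) that _ pr(4), of 0] feedback_slot[OF pr(1-3) that _ pr(4), of 1]
      by auto
  qed
  then have "read_word fl M W p r = word L (idf u) (X u) p"
    using read_word_eq u(1) pr(1,2) by blast
  then show ?thesis
    using y \<rho> word_mod_div[OF u(1)] u by auto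
qed

definition clean_primes :: "nat \<Rightarrow> nat set" where
  "clean_primes u = {p. prime p \<and> p < M \<and>
      (\<forall>w\<in>V. (w = v \<or> E v w) \<and> w \<noteq> u \<longrightarrow> idf w mod p \<noteq> idf u mod p)}"

lemma finite_clean_primes: "finite (clean_primes u)"
  by (rule finite_subset[of _ "{..<M}"]) (auto simp: clean_primes_def)

lemma received_if_clean:
  assumes u: "u \<in> V" "E v u" and p: "p \<in> clean_primes u"
  shows "(idf u, p, X u mod p) \<in> received L M W (idf v) fl"
proof -
  define r where "r = idf u mod p"
  have p: "prime p" "p < M" and clean: "\<And>w. w \<in> V \<Longrightarrow> (w = v \<or> E v w) \<Longrightarrow> w \<noteq> u \<Longrightarrow> idf w mod p \<noteq> r"
    using p by (auto simp: clean_primes_def r_def)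
  have "r < p"
    using p prime_gt_0_nat[of p] by (simp add: r_def)
  then have "r < M"
    using p by simp
  have "v \<noteq> u"
    using u irrefl by auto
  then have vr: "idf v mod p \<noteq> r"
    using clean v by simp
  have slot: "fl ! slot M W p r i h = (odd (word L (idf u) (X u) p div 2 ^ i) = (h = 0))"
    if "i < W" "h < 2" for i h
    using feedback_slot[OF p \<open>r < M\<close> that vr] clean u by (auto simp: r_def)
  then have "polarities_differ fl M W p r"
    by (simp add: polarities_differ_def)
  moreover have "read_word fl M W p r = word L (idf u) (X u) p"
    using read_word_eq[OF u(1) p] slot by simp
  ultimately show ?thesis
    unfolding received_def using p \<open>r < M\<close> vr word_mod_div[OF u(1)]
    by (intro image_eqI[where x = "(p, r)"]) auto
qed

lemma card_clean_primes_ge: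
  assumes u: "u \<in> V" "E v u" and "finite V"
  shows "card {p. prime p \<and> p < M} \<le> card (clean_primes u) + card {w\<in>V. E v w} * L"
proof -
  define C where "C = {w\<in>V. (w = v \<or> E v w) \<and> w \<noteq> u}"
  define S where "S w = {p. prime p \<and> p < M \<and> idf w mod p = idf u mod p}" for w
  have "{p. prime p \<and> p < M} \<subseteq> clean_primes u \<union> (\<Union>w\<in>C. S w)"
    by (auto simp: clean_primes_def C_def S_def)
  moreover have "finite C" "\<And>w. finite (S w)"
    using \<open>finite V\<close> by (simp_all add: C_def S_def)
  ultimately have "card {p. prime p \<and> p < M} \<le> card (clean_primes u \<union> (\<Union>w\<in>C. S w))"
    using finite_clean_primes by (intro card_mono) auto
  also have "\<dots> \<le> card (clean_primes u) + card (\<Union>w\<in>C. S w)"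
    by (rule card_Un_le)
  also have "card (\<Union>w\<in>C. S w) \<le> (\<Sum>w\<in>C. card (S w))"
    using \<open>finite C\<close> by (rule card_UN_le)
  also have "\<dots> \<le> (\<Sum>w\<in>C. L)"
  proof (rule sum_mono, rule less_imp_le)
    fix w
    assume "w \<in> C"
    then have "w \<in> V" "idf w \<noteq> idf u"
      using inj_onD[OF inj _ _ u(1)] by (auto simp: C_def)
    then show "card (S w) < L"
      using card_primes_congruent_less id_less u(1) \<open>finite (S w)\<close> by (simp add: S_def)
  qed
  also have "card C \<le> card {w\<in>V. E v w}"
  proof -
    have "C \<subseteq> insert v {w\<in>V. E v w} - {u}"
      using v by (auto simp: C_def)
    then have "card C \<le> card (insert v {w\<in>V. E v w} - {u})"
      using \<open>finite V\<close> by (intro card_mono) auto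
    also have "\<dots> \<le> card {w\<in>V. E v w}"
      using \<open>finite V\<close> u by (simp add: card_insert_if)
    finally show ?thesis .
  qed
  then have "(\<Sum>w\<in>C. L) \<le> card {w\<in>V. E v w} * L"
    by simp
  finally show ?thesis
    by simp
qed

lemma phase_delivers:
  assumes "finite V" "card {w\<in>V. E v w} \<le> D" "D * L + B < card {p. prime p \<and> p < M}"
    and payload_less: "\<And>u. u \<in> V \<Longrightarrow> X u < 2 ^ B"
  shows "heard_ids L M W (idf v) fl = idf ` {u\<in>V. E v u}"
    and "\<And>u. u \<in> V \<Longrightarrow> E v u \<Longrightarrow> decode L M W (idf v) fl B (idf u) = X u"
proof -
  have clean: "B < card (clean_primes u)" if "u \<in> V" "E v u" for u
    using card_clean_primes_ge[OF that \<open>finite V\<close>] assms(3) mult_le_mono1[OF assms(2), of L]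
    by linarith
  show "heard_ids L M W (idf v) fl = idf ` {u\<in>V. E v u}"
  proof
    show "heard_ids L M W (idf v) fl \<subseteq> idf ` {u\<in>V. E v u}"
      using received_sound by (force simp: heard_ids_def)
    show "idf ` {u\<in>V. E v u} \<subseteq> heard_ids L M W (idf v) fl"
    proof
      fix y
      assume "y \<in> idf ` {u\<in>V. E v u}"
      then obtain u where u: "u \<in> V" "E v u" "y = idf u"
        by auto
      obtain p where "p \<in> clean_primes u"
        using clean[OF u(1,2)] by (metis card.empty ex_in_conv not_less0)
      then show "y \<in> heard_ids L M W (idf v) fl"
        using received_if_clean[OF u(1,2)] u(3) unfolding heard_ids_def by force
    qed
  qed
  fix u
  assume u: "u \<in> V" "E v u"
  have from_u: "X' = X u mod p" if "(idf u, p, X') \<in> received L M W (idf v) fl" for p X'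
    using received_sound[OF that] inj_onD[OF inj] u(1) by metis
  show "decode L M W (idf v) fl B (idf u) = X u"
    unfolding decode_def
  proof (rule the_equality)
    show "X u < 2 ^ B \<and> (\<forall>p \<rho>. (idf u, p, \<rho>) \<in> received L M W (idf v) fl \<longrightarrow> X u mod p = \<rho>)"
      using payload_less[OF u(1)] from_u by auto
  next
    fix X'
    assume X': "X' < 2 ^ B \<and> (\<forall>p \<rho>. (idf u, p, \<rho>) \<in> received L M W (idf v) fl \<longrightarrow> X' mod p = \<rho>)"
    have "\<forall>p\<in>clean_primes u. prime p \<and> X' mod p = X u mod p"
      using X' received_if_clean[OF u] by (auto simp: clean_primes_def)
    then show "X' = X u"
      using card_primes_congruent_less[of X' "X u" B] X' payload_less[OF u(1)] clean[OF u]
        finite_clean_primes by fastforce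
  qed
qed

end

section \<open>The simulation protocol\<close>

lemma degree_le_max_degree:
  assumes "network V E" "v \<in> V"
  shows "card {u\<in>V. E v u} \<le> max_degree V E"
  using assms by (auto simp: network_def max_degree_def degree_def)

lemma max_degree_less_card:
  assumes net: "network V E" and "V \<noteq> {}"
  shows "max_degree V E < card V"
proof -
  have "finite V"
    using net by (simp add: network_def)
  then have "max_degree V E \<in> degree V E ` V"
    unfolding max_degree_def using \<open>V \<noteq> {}\<close> by (intro Max_in) auto
  then obtain w where w: "w \<in> V" "max_degree V E = card {u\<in>V. E w u}"
    by (auto simp: degree_def)
  have "{u\<in>V. E w u} \<subseteq> V - {w}"
    using net by (auto simp: network_def)
  then have "card {u\<in>V. E w u} < card V"
    using \<open>finite V\<close> w(1) by (meson card_Diff1_less card_mono finite_Diff order.strict_trans1)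
  then show ?thesis
    using w(2) by simp
qed

lemma finite_bool_lists: "finite {m :: bool list. length m \<le> L}"
  using finite_lists_length_le[of "UNIV :: bool set" L] by simp

lemma card_bool_lists_less: "card {m :: bool list. length m \<le> L} < 2 ^ Suc L"
proof -
  have "card {m :: bool list. length m \<le> L} = (\<Sum>i\<le>L. 2 ^ i)"
    using card_lists_length_le[of "UNIV :: bool set" L] by simp
  also have "\<dots> < 2 ^ Suc L"
    by (induction L) auto
  finally show ?thesis .
qed

lemma card_lists_length_le_less:
  assumes "finite A" "card A \<le> 2 ^ a"
  shows "card {xs. set xs \<subseteq> A \<and> length xs \<le> D} < 2 ^ ((D + 1) * (a + 1))"
proof -
  have "card {xs. set xs \<subseteq> A \<and> length xs \<le> D} = (\<Sum>i\<le>D. card A ^ i)"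
    using assms(1) by (rule card_lists_length_le)
  also have "\<dots> \<le> (\<Sum>i\<le>D. (2 ^ a) ^ D)"
  proof (rule sum_mono)
    fix i
    assume "i \<in> {..D}"
    then have "card A ^ i \<le> (2 ^ a) ^ i" "((2::nat) ^ a) ^ i \<le> (2 ^ a) ^ D"
      using assms(2) by (simp_all add: power_mono power_increasing)
    then show "card A ^ i \<le> (2 ^ a) ^ D"
      by simp
  qed
  also have "\<dots> = (D + 1) * 2 ^ (a * D)"
    by (simp add: power_mult)
  also have "\<dots> < 2 ^ (D + 1) * 2 ^ (a * D)"
    using less_exp[of "D + 1"] by (intro mult_strict_right_mono) simp_all
  also have "\<dots> = 2 ^ (D + 1 + a * D)"
    by (simp add: power_add)
  also have "\<dots> \<le> 2 ^ ((D + 1) * (a + 1))"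
    by (intro power_increasing) (simp_all add: algebra_simps)
  finally show ?thesis .
qed

definition id_bits :: "real \<Rightarrow> nat \<Rightarrow> nat" where
  "id_bits c b = nat \<lceil>c\<rceil> * b"

definition msg_bits :: "nat \<Rightarrow> nat \<Rightarrow> nat" where
  "msg_bits K b = K * (b + 1)"

definition payloads :: "real \<Rightarrow> nat \<Rightarrow> nat \<Rightarrow> nat \<Rightarrow> (nat \<times> bool list) list set" where
  "payloads c K b D =
     {xs. set xs \<subseteq> {..<2 ^ id_bits c b} \<times> {m. length m \<le> msg_bits K b} \<and> length xs \<le> D}"

definition payload_bits :: "real \<Rightarrow> nat \<Rightarrow> nat \<Rightarrow> nat \<Rightarrow> nat" where
  "payload_bits c K b D = (D + 1) * (id_bits c b + msg_bits K b + 2)"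

definition primes_needed :: "real \<Rightarrow> nat \<Rightarrow> nat \<Rightarrow> nat \<Rightarrow> nat" where
  "primes_needed c K b D = D * id_bits c b + payload_bits c K b D + 1"

definition modulus_bound :: "real \<Rightarrow> nat \<Rightarrow> nat \<Rightarrow> nat \<Rightarrow> nat" where
  "modulus_bound c K b D = chebyshev_bound (primes_needed c K b D)"

definition word_bits :: "real \<Rightarrow> nat \<Rightarrow> nat \<Rightarrow> nat \<Rightarrow> nat" where
  "word_bits c K b D = id_bits c b + floorlog 2 (modulus_bound c K b D)"

definition phase_length :: "real \<Rightarrow> nat \<Rightarrow> nat \<Rightarrow> nat \<Rightarrow> nat" where
  "phase_length c K b D = modulus_bound c K b D * modulus_bound c K b D * word_bits c K b D * 2"

definition payload_code :: "real \<Rightarrow> nat \<Rightarrow> nat \<Rightarrow> nat \<Rightarrow> (nat \<times> bool list) list \<Rightarrow> nat" where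
  "payload_code c K b D =
     (SOME g. bij_betw g (payloads c K b D) {0..<card (payloads c K b D)})"

lemma finite_payloads: "finite (payloads c K b D)"
  unfolding payloads_def by (intro finite_lists_length_le finite_cartesian_product finite_bool_lists) auto

lemma card_payloads_less: "card (payloads c K b D) < 2 ^ payload_bits c K b D"
proof -
  let ?A = "{..<(2::nat) ^ id_bits c b} \<times> {m :: bool list. length m \<le> msg_bits K b}"
  have "card ?A \<le> 2 ^ id_bits c b * 2 ^ Suc (msg_bits K b)"
    using card_bool_lists_less[of "msg_bits K b"] by (simp add: card_cartesian_product)
  also have "\<dots> = 2 ^ (id_bits c b + msg_bits K b + 1)"
    by (simp add: power_add)
  finally have "card {xs. set xs \<subseteq> ?A \<and> length xs \<le> D}
      < 2 ^ ((D + 1) * (id_bits c b + msg_bits K b + 1 + 1))"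
    by (intro card_lists_length_le_less finite_cartesian_product finite_bool_lists) auto
  then show ?thesis
    by (simp add: payloads_def payload_bits_def)
qed

lemma bij_betw_payload_code:
  "bij_betw (payload_code c K b D) (payloads c K b D) {0..<card (payloads c K b D)}"
  unfolding payload_code_def using ex_bij_betw_finite_nat[OF finite_payloads] by (rule someI_ex)

lemma less_power2_id_bits:
  assumes "c \<ge> 1" "n \<ge> 1" "real x \<le> real n powr c"
  shows "x < 2 ^ id_bits c (floorlog 2 n)"
proof -
  from assms(3) have "real x \<le> real n powr c" .
  also have "\<dots> \<le> real n powr real (nat \<lceil>c\<rceil>)"
    using assms(1,2) by (intro powr_mono) auto
  also have "\<dots> = real n ^ nat \<lceil>c\<rceil>"
    using assms(2) by (simp add: powr_realpow)
  also have "\<dots> < (2 ^ floorlog 2 n) ^ nat \<lceil>c\<rceil>"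
    using assms less_power2_floorlog[of n] by (intro power_strict_mono) (simp_all flip: of_nat_less_iff)
  also have "\<dots> = real (2 ^ id_bits c (floorlog 2 n))"
    by (simp add: id_bits_def power_mult[symmetric] mult.commute)
  finally show ?thesis
    by linarith
qed

lemma two_power_id_bits_mult_modulus_bound_le: "2 ^ id_bits c b * modulus_bound c K b D \<le> 2 ^ word_bits c K b D"
  using less_power2_floorlog[of "modulus_bound c K b D"] by (simp add: word_bits_def power_add)

lemma card_primes_less_modulus_bound:
  "D * id_bits c b + payload_bits c K b D < card {p. prime p \<and> p < modulus_bound c K b D}"
  using card_primes_less_chebyshev_bound[of "primes_needed c K b D"]
  by (simp add: modulus_bound_def primes_needed_def)

definition payload_of ::
    "real \<Rightarrow> nat \<Rightarrow> nat \<Rightarrow> nat \<Rightarrow> nat \<Rightarrow> (nat \<Rightarrow> bool list) \<Rightarrow> bool list \<Rightarrow> nat" where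
  "payload_of c K b D x f fl =
     payload_code c K b D (map (\<lambda>y. (y, f y))
       (sorted_list_of_set (heard_ids (id_bits c b) (modulus_bound c K b D) (word_bits c K b D) x fl)))"

definition congest_protocol :: "nat \<Rightarrow> protocol" where
  "congest_protocol K n c D x f h =
     (let b = floorlog 2 n; L = id_bits c b; M = modulus_bound c K b D; W = word_bits c K b D;
          T = phase_length c K b D; t = length h
      in if t < T then beeps_in_slot L M W x 0 t
         else if t < 2 * T then beeps_in_slot L M W x (payload_of c K b D x f (take T h)) (t - T)
         else False)"

definition congest_output ::
    "nat \<Rightarrow> nat \<Rightarrow> real \<Rightarrow> nat \<Rightarrow> nat \<Rightarrow> (nat \<Rightarrow> bool list) \<Rightarrow> bool list \<Rightarrow> (nat \<times> bool list) set" where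
  "congest_output K n c D x f h =
     (let b = floorlog 2 n; L = id_bits c b; M = modulus_bound c K b D; W = word_bits c K b D;
          fl = drop (phase_length c K b D) h;
          unpack = the_inv_into (payloads c K b D) (payload_code c K b D)
      in (\<lambda>y. (y, the (map_of (unpack (decode L M W x fl (payload_bits c K b D) y)) x))) `
           heard_ids L M W x fl)"

(* In a network the maximum degree is below the number of nodes (max_degree_less_card); the running
   time estimate needs D < n, so the other branch is a placeholder that never occurs. *)
definition congest_time :: "real \<Rightarrow> nat \<Rightarrow> nat \<Rightarrow> nat \<Rightarrow> nat" where
  "congest_time c K n D = (if D < n then 2 * phase_length c K (floorlog 2 n) D else 0)"

lemma congest_protocol_phase0:
  assumes "length h < phase_length c K (floorlog 2 n) D"
  shows "congest_protocol K n c D x f h =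
    beeps_in_slot (id_bits c (floorlog 2 n)) (modulus_bound c K (floorlog 2 n) D)
      (word_bits c K (floorlog 2 n) D) x 0 (length h)"
  using assms by (simp add: congest_protocol_def Let_def)

lemma congest_protocol_phase1:
  assumes "phase_length c K (floorlog 2 n) D \<le> length h" "length h < 2 * phase_length c K (floorlog 2 n) D"
  shows "congest_protocol K n c D x f h =
    beeps_in_slot (id_bits c (floorlog 2 n)) (modulus_bound c K (floorlog 2 n) D) (word_bits c K (floorlog 2 n) D) x
      (payload_of c K (floorlog 2 n) D x f (take (phase_length c K (floorlog 2 n) D) h))
      (length h - phase_length c K (floorlog 2 n) D)"
  using assms by (simp add: congest_protocol_def Let_def)

locale congest_simulation =
  fixes c :: real and K :: nat and V :: "nat set" and E :: "nat \<Rightarrow> nat \<Rightarrow> bool"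
    and idf :: "nat \<Rightarrow> nat" and inp :: "nat \<Rightarrow> nat \<Rightarrow> bool list"
  assumes c: "c \<ge> 1"
    and network: "network V E"
    and nonempty: "V \<noteq> {}"
    and inj: "inj_on idf V"
    and id_bound: "\<And>v. v \<in> V \<Longrightarrow> real (idf v) \<le> real (card V) powr c"
    and msg_bound: "\<And>u v. u \<in> V \<Longrightarrow> v \<in> V \<Longrightarrow> E u v \<Longrightarrow>
          length (inp u (idf v)) \<le> K * (nat \<lceil>log 2 (real (card V))\<rceil> + 1)"
begin

abbreviation "\<beta> \<equiv> floorlog 2 (card V)"
abbreviation "\<Delta> \<equiv> max_degree V E"
abbreviation "L \<equiv> id_bits c \<beta>"
abbreviation "M \<equiv> modulus_bound c K \<beta> \<Delta>"
abbreviation "W \<equiv> word_bits c K \<beta> \<Delta>"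
abbreviation "T \<equiv> phase_length c K \<beta> \<Delta>"
abbreviation "B \<equiv> payload_bits c K \<beta> \<Delta>"
abbreviation "hist \<equiv> beep_hist (congest_protocol K) c V E idf inp"

definition outgoing :: "nat \<Rightarrow> (nat \<times> bool list) list" where
  "outgoing u = map (\<lambda>y. (y, inp u y)) (sorted_list_of_set (idf ` {w\<in>V. E u w}))"

abbreviation "payload u \<equiv> payload_code c K \<beta> \<Delta> (outgoing u)"

lemma finite_V: "finite V"
  using network by (simp add: network_def)

lemma card_V_pos: "card V \<ge> 1"
  using finite_V nonempty by (simp add: Suc_le_eq card_gt_0_iff)

lemma id_less: "u \<in> V \<Longrightarrow> idf u < 2 ^ L"
  using less_power2_id_bits[OF c card_V_pos id_bound] by simp

lemma slot_phase_segment: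
  assumes "v \<in> V"
    and "\<And>w j. w \<in> V \<Longrightarrow> j < T \<Longrightarrow>
      congest_protocol K (card V) c \<Delta> (idf w) (inp w) (hist (t + j) w) = beeps_in_slot L M W (idf w) (X w) j"
  shows "slot_phase V E idf L M W X v (drop t (hist (t + T) v))"
proof
  fix j
  assume "j < M * M * W * 2"
  then show "drop t (hist (t + T) v) ! j =
      (\<not> beeps_in_slot L M W (idf v) (X v) j \<and> (\<exists>w\<in>V. E v w \<and> beeps_in_slot L M W (idf w) (X w) j))"
    using assms by (intro nth_drop_beep_hist) (auto simp: phase_length_def)
qed (use network inj id_less two_power_id_bits_mult_modulus_bound_le assms(1) in \<open>auto simp: network_def\<close>)

lemma slot_phase0: "w \<in> V \<Longrightarrow> slot_phase V E idf L M W (\<lambda>_. 0) w (hist T w)"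
  using slot_phase_segment[of w 0] by (simp add: congest_protocol_phase0)

lemma heard_ids_phase0: "w \<in> V \<Longrightarrow> heard_ids L M W (idf w) (hist T w) = idf ` {u\<in>V. E w u}"
  using slot_phase.phase_delivers(1)[OF slot_phase0 finite_V degree_le_max_degree[OF network] card_primes_less_modulus_bound]
  by simp

lemma outgoing_in_payloads: "u \<in> V \<Longrightarrow> outgoing u \<in> payloads c K \<beta> \<Delta>"
proof -
  assume u: "u \<in> V"
  have fin: "finite (idf ` {w\<in>V. E u w})"
    using finite_V by simp
  have "length (outgoing u) = card {w\<in>V. E u w}"
    using inj by (simp add: outgoing_def card_image inj_on_subset)
  also have "\<dots> \<le> \<Delta>"
    using degree_le_max_degree[OF network u] .
  finally have "length (outgoing u) \<le> \<Delta>" .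
  moreover have "set (outgoing u) \<subseteq> {..<2 ^ L} \<times> {m. length m \<le> msg_bits K \<beta>}"
  proof
    fix e
    assume "e \<in> set (outgoing u)"
    then obtain w where w: "w \<in> V" "E u w" and e: "e = (idf w, inp u (idf w))"
      using fin by (auto simp: outgoing_def)
    have "K * (nat \<lceil>log 2 (real (card V))\<rceil> + 1) \<le> msg_bits K \<beta>"
      unfolding msg_bits_def using ceiling_log2_le_floorlog2[OF card_V_pos] by (intro mult_le_mono2) simp
    then have "length (inp u (idf w)) \<le> msg_bits K \<beta>"
      by (rule le_trans[OF msg_bound[OF u w]])
    then show "e \<in> {..<2 ^ L} \<times> {m. length m \<le> msg_bits K \<beta>}"
      using id_less[OF w(1)] e by simp
  qed
  ultimately show ?thesis
    by (simp add: payloads_def)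
qed

lemma payload_of_phase0:
  "u \<in> V \<Longrightarrow> payload_of c K \<beta> \<Delta> (idf u) (inp u) (hist T u) = payload u"
  by (simp add: payload_of_def heard_ids_phase0 outgoing_def)

lemma slot_phase1: "v \<in> V \<Longrightarrow> slot_phase V E idf L M W payload v (drop T (hist (2 * T) v))"
  using slot_phase_segment[of v T]
  by (simp add: mult_2 congest_protocol_phase1 take_beep_hist payload_of_phase0)

lemma payload_less: "u \<in> V \<Longrightarrow> payload u < 2 ^ B"
  using bij_betwE[OF bij_betw_payload_code] outgoing_in_payloads card_payloads_less
  by (meson atLeastLessThan_iff order.strict_trans)

lemma congest_output_correct:
  assumes v: "v \<in> V"
  shows "congest_output K (card V) c \<Delta> (idf v) (inp v) (hist (congest_time c K (card V) \<Delta>) v)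
    = {(idf u, inp u (idf v)) | u. u \<in> V \<and> E u v}"
proof -
  define fl where "fl = drop T (hist (2 * T) v)"
  interpret phase1: slot_phase V E idf L M W payload v fl
    unfolding fl_def using v by (rule slot_phase1)
  have heard: "heard_ids L M W (idf v) fl = idf ` {u\<in>V. E v u}"
    and decode: "\<And>u. u \<in> V \<Longrightarrow> E v u \<Longrightarrow> decode L M W (idf v) fl B (idf u) = payload u"
    using phase1.phase_delivers[OF finite_V degree_le_max_degree[OF network v] card_primes_less_modulus_bound payload_less]
    by auto
  have unpack: "the_inv_into (payloads c K \<beta> \<Delta>) (payload_code c K \<beta> \<Delta>) (payload u) = outgoing u"
    if "u \<in> V" for u
    using bij_betw_imp_inj_on[OF bij_betw_payload_code] outgoing_in_payloads[OF that]
    by (rule the_inv_into_f_f)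
  have lookup: "map_of (outgoing u) (idf v) = Some (inp u (idf v))" if "u \<in> V" "E u v" for u
    using that v finite_V by (auto simp: outgoing_def map_of_map_restrict)
  have "congest_time c K (card V) \<Delta> = 2 * T"
    using max_degree_less_card[OF network nonempty] by (simp add: congest_time_def)
  then have "congest_output K (card V) c \<Delta> (idf v) (inp v) (hist (congest_time c K (card V) \<Delta>) v)
      = (\<lambda>y. (y, the (map_of (the_inv_into (payloads c K \<beta> \<Delta>) (payload_code c K \<beta> \<Delta>)
          (decode L M W (idf v) fl B y)) (idf v)))) ` heard_ids L M W (idf v) fl"
    by (simp add: congest_output_def Let_def fl_def)
  also have "\<dots> = (\<lambda>u. (idf u, inp u (idf v))) ` {u\<in>V. E v u}"
    unfolding heard image_image
  proof (rule image_cong[OF refl])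
    fix u
    assume "u \<in> {u\<in>V. E v u}"
    then have "u \<in> V" "E v u" "E u v"
      using network by (auto simp: network_def)
    then show "(idf u, the (map_of (the_inv_into (payloads c K \<beta> \<Delta>) (payload_code c K \<beta> \<Delta>)
        (decode L M W (idf v) fl B (idf u))) (idf v))) = (idf u, inp u (idf v))"
      using decode unpack lookup by simp
  qed
  also have "\<dots> = {(idf u, inp u (idf v)) | u. u \<in> V \<and> E u v}"
    using network by (auto simp: network_def)
  finally show ?thesis .
qed

end

section \<open>Running time\<close>

definition size_factor :: "real \<Rightarrow> nat \<Rightarrow> nat" where
  "size_factor c K = nat \<lceil>c\<rceil> + K + 2"

lemma primes_needed_le:
  assumes "b \<ge> 1"
  shows "primes_needed c K b D \<le> 2 * size_factor c K * (D + 1) * b"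
proof -
  let ?k = "nat \<lceil>c\<rceil>"
  have "2 * ?k * b + K * (b + 1) + 3 \<le> 2 * size_factor c K * b"
  proof -
    have "K \<le> K * b"
      using assms by simp
    moreover have "K * (b + 1) = K * b + K"
      by simp
    moreover have "2 * size_factor c K * b = 2 * ?k * b + 2 * (K * b) + 4 * b"
      by (simp add: size_factor_def algebra_simps)
    ultimately show ?thesis
      using assms by linarith
  qed
  then have "(D + 1) * (2 * ?k * b + K * (b + 1) + 3) \<le> (D + 1) * (2 * size_factor c K * b)"
    by (rule mult_le_mono2)
  moreover have "primes_needed c K b D \<le> (D + 1) * (2 * ?k * b + K * (b + 1) + 3)"
    by (simp add: primes_needed_def payload_bits_def id_bits_def msg_bits_def algebra_simps)
  ultimately show ?thesis
    by (simp add: algebra_simps)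
qed

lemma floorlog2_primes_needed_le:
  assumes "b \<ge> 1" "floorlog 2 (D + 1) \<le> b"
  shows "floorlog 2 (primes_needed c K b D) \<le> 4 * size_factor c K * b"
proof -
  let ?s = "size_factor c K"
  have "floorlog 2 (primes_needed c K b D) \<le> floorlog 2 (2 * ?s * (D + 1) * b)"
    using primes_needed_le[OF assms(1)] by (rule floorlog_mono)
  also have "\<dots> \<le> floorlog 2 (2 * ?s) + floorlog 2 (D + 1) + floorlog 2 b"
    using floorlog2_mult_le[of "2 * ?s * (D + 1)" b] floorlog2_mult_le[of "2 * ?s" "D + 1"] by simp
  also have "\<dots> \<le> 2 * ?s * b + b + b"
  proof -
    have "2 * ?s \<le> 2 * ?s * b"
      using assms(1) by simp
    then show ?thesis
      using assms floorlog2_le_self[of "2 * ?s"] floorlog2_le_self[of b] by linarith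
  qed
  also have "\<dots> \<le> 4 * ?s * b"
  proof -
    have "b \<le> ?s * b"
      by (simp add: size_factor_def)
    then show ?thesis
      by linarith
  qed
  finally show ?thesis .
qed

lemma num_moduli_le:
  assumes "b \<ge> 1" "floorlog 2 (D + 1) \<le> b"
  shows "modulus_bound c K b D \<le> 64 * (size_factor c K ^ 2 * (D + 1) * b ^ 2)"
proof -
  let ?s = "size_factor c K" and ?R = "primes_needed c K b D"
  have s: "?s \<ge> 1"
    by (simp add: size_factor_def)
  have "1 \<le> ?s * b"
    using s assms(1) by simp
  then have "floorlog 2 ?R + 3 \<le> 7 * ?s * b"
    using floorlog2_primes_needed_le[OF assms, of c K] by linarith
  then have "4 * ?R * (floorlog 2 ?R + 3) \<le> 4 * (2 * ?s * (D + 1) * b) * (7 * ?s * b)"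
    using primes_needed_le[OF assms(1)] by (intro mult_le_mono) simp_all
  also have "\<dots> = 56 * (?s ^ 2 * (D + 1) * b ^ 2)"
    by (simp add: power2_eq_square algebra_simps)
  finally have "modulus_bound c K b D \<le> 56 * (?s ^ 2 * (D + 1) * b ^ 2) + 1"
    by (simp add: modulus_bound_def chebyshev_bound_def)
  moreover have "1 \<le> ?s ^ 2 * (D + 1) * b ^ 2"
    using s assms(1) by (simp add: Suc_le_eq)
  ultimately show ?thesis
    by linarith
qed

lemma word_bits_le:
  assumes "b \<ge> 1" "floorlog 2 (D + 1) \<le> b"
  shows "word_bits c K b D \<le> 68 * size_factor c K ^ 2 * b"
proof -
  let ?s = "size_factor c K"
  have s: "?s \<ge> 1"
    by (simp add: size_factor_def)
  have "floorlog 2 (modulus_bound c K b D) \<le> floorlog 2 (64 * ?s ^ 2 * (D + 1) * (b * b))"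
    using num_moduli_le[OF assms, of c K] by (intro floorlog_mono) (simp add: power2_eq_square algebra_simps)
  also have "\<dots> \<le> floorlog 2 (64 * ?s ^ 2) + floorlog 2 (D + 1) + (floorlog 2 b + floorlog 2 b)"
    using floorlog2_mult_le[of "64 * ?s ^ 2 * (D + 1)" "b * b"] floorlog2_mult_le[of "64 * ?s ^ 2" "D + 1"]
      floorlog2_mult_le[of b b] by simp
  also have "\<dots> \<le> 64 * ?s ^ 2 * b + 3 * b"
  proof -
    have "64 * ?s ^ 2 \<le> 64 * ?s ^ 2 * b"
      using assms(1) by simp
    then show ?thesis
      using assms floorlog2_le_self[of "64 * ?s ^ 2"] floorlog2_le_self[of b] by linarith
  qed
  moreover have "id_bits c b \<le> ?s * b"
    unfolding id_bits_def size_factor_def by (intro mult_le_mono1) (simp only: add.assoc le_add1)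
  moreover have "?s * b \<le> ?s ^ 2 * b" "1 * b \<le> ?s ^ 2 * b"
    using s by (intro mult_le_mono1; simp add: power2_eq_square)+
  ultimately show ?thesis
    unfolding word_bits_def by linarith
qed

lemma congest_time_le:
  assumes "D < n"
  shows "congest_time c K n D \<le> 4 * 64 ^ 2 * 68 * size_factor c K ^ 6 * (D + 1) ^ 2 * floorlog 2 n ^ 5"
proof -
  let ?b = "floorlog 2 n" and ?s = "size_factor c K"
  have b: "?b \<ge> 1" "floorlog 2 (D + 1) \<le> ?b"
    using assms floorlog2_pos[of n] floorlog_mono[of "D + 1" n] by simp_all
  have "congest_time c K n D = 4 * (modulus_bound c K ?b D * modulus_bound c K ?b D * word_bits c K ?b D)"
    using assms by (simp add: congest_time_def phase_length_def)
  also have "\<dots> \<le> 4 * ((64 * (?s ^ 2 * (D + 1) * ?b ^ 2)) * (64 * (?s ^ 2 * (D + 1) * ?b ^ 2))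
      * (68 * ?s ^ 2 * ?b))"
    using mult_le_mono[OF mult_le_mono[OF num_moduli_le[OF b] num_moduli_le[OF b]] word_bits_le[OF b], of c K c K c K]
    by (rule mult_le_mono2)
  also have "\<dots> = 4 * 64 ^ 2 * 68 * ?s ^ 6 * (D + 1) ^ 2 * ?b ^ 5"
    by (simp add: power2_eq_square power_numeral_reduce algebra_simps)
  finally show ?thesis .
qed

lemma congest_time_bound:
  "\<exists>(C::real) (k::nat). \<forall>n \<Delta>.
     real (congest_time c K n \<Delta>) \<le> C * (real \<Delta> + 1) ^ 2 * (log 2 (real n + 1)) ^ k * log 2 (real \<Delta> + 2)"
proof (intro exI allI)
  fix n D :: nat
  define G where "G = real (4 * 64 ^ 2 * 68 * size_factor c K ^ 6)"
  have log_D: "1 \<le> log 2 (real D + 2)"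
    by simp
  show "real (congest_time c K n D) \<le> (32 * G) * (real D + 1) ^ 2 * (log 2 (real n + 1)) ^ 5 * log 2 (real D + 2)"
  proof (cases "D < n")
    case True
    let ?l = "log 2 (real n + 1)"
    have "real (congest_time c K n D)
        \<le> real (4 * 64 ^ 2 * 68 * size_factor c K ^ 6 * (D + 1) ^ 2 * floorlog 2 n ^ 5)"
      using congest_time_le[OF True, of c K] by (simp only: of_nat_le_iff)
    also have "\<dots> = G * (real D + 1) ^ 2 * real (floorlog 2 n) ^ 5"
      by (simp add: G_def)
    also have "\<dots> \<le> G * (real D + 1) ^ 2 * (2 * ?l) ^ 5"
      using floorlog2_le_log2[of n] True by (intro mult_left_mono power_mono) (simp_all add: G_def)
    also have "\<dots> = (32 * G) * (real D + 1) ^ 2 * ?l ^ 5"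
      by (simp add: power_mult_distrib)
    also have "\<dots> \<le> (32 * G) * (real D + 1) ^ 2 * ?l ^ 5 * log 2 (real D + 2)"
    proof -
      have "0 \<le> (32 * G) * (real D + 1) ^ 2 * ?l ^ 5"
        by (simp add: G_def)
      then show ?thesis
        using mult_left_mono[OF log_D] by simp
    qed
    finally show ?thesis .
  next
    case False
    then show ?thesis
      using log_D by (simp add: congest_time_def G_def)
  qed
qed

theorem theorem6:
  fixes c :: real and K :: nat
  assumes "c \<ge> 1"
  shows "\<exists>(P :: protocol)
            (out :: nat \<Rightarrow> real \<Rightarrow> nat \<Rightarrow> nat \<Rightarrow> (nat \<Rightarrow> bool list) \<Rightarrow> bool list \<Rightarrow> (nat \<times> bool list) set)
            (T :: nat \<Rightarrow> nat \<Rightarrow> nat).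
    (\<exists>(C::real) (k::nat). \<forall>n \<Delta>.
        real (T n \<Delta>) \<le> C * (real \<Delta> + 1)^2 * (log 2 (real n + 1))^k * log 2 (real \<Delta> + 2))
  \<and> (\<forall>V E (idf :: nat \<Rightarrow> nat) (inp :: nat \<Rightarrow> nat \<Rightarrow> bool list).
        network V E
      \<and> inj_on idf V
      \<and> (\<forall>v\<in>V. 1 \<le> idf v \<and> real (idf v) \<le> real (card V) powr c)
      \<and> (\<forall>u\<in>V. \<forall>v\<in>V. E u v \<longrightarrow>
            length (inp u (idf v)) \<le> K * (nat \<lceil>log 2 (real (card V))\<rceil> + 1))
      \<longrightarrow> (\<forall>v\<in>V.
            out (card V) c (max_degree V E) (idf v) (inp v)
                (beep_hist P c V E idf inp (T (card V) (max_degree V E)) v)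
            = {(idf u, inp u (idf v)) | u. u \<in> V \<and> E u v}))"
proof (intro exI[of _ "congest_protocol K"] exI[of _ "congest_output K"] exI[of _ "congest_time c K"]
    conjI allI impI ballI)
  show "\<exists>(C::real) (k::nat). \<forall>n \<Delta>. real (congest_time c K n \<Delta>)
      \<le> C * (real \<Delta> + 1) ^ 2 * (log 2 (real n + 1)) ^ k * log 2 (real \<Delta> + 2)"
    by (rule congest_time_bound)
  fix V E and idf :: "nat \<Rightarrow> nat" and inp :: "nat \<Rightarrow> nat \<Rightarrow> bool list" and v
  assume hyps: "network V E \<and> inj_on idf V \<and> (\<forall>v\<in>V. 1 \<le> idf v \<and> real (idf v) \<le> real (card V) powr c)
      \<and> (\<forall>u\<in>V. \<forall>v\<in>V. E u v \<longrightarrow> length (inp u (idf v)) \<le> K * (nat \<lceil>log 2 (real (card V))\<rceil> + 1))"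
    and v: "v \<in> V"
  interpret congest_simulation c K V E idf inp
    using assms hyps v by unfold_locales auto
  show "congest_output K (card V) c (max_degree V E) (idf v) (inp v)
      (beep_hist (congest_protocol K) c V E idf inp (congest_time c K (card V) (max_degree V E)) v)
    = {(idf u, inp u (idf v)) | u. u \<in> V \<and> E u v}"
    using v by (rule congest_output_correct)
qed

end
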